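(* Let $K$ be an arbitrary field, $n\ge1$, and $m=\lfloor n/2\rfloor+1$. Then every $m\times m$ minor of the generic matrix $\Phi$ lies in the ideal of $A$ generated by $T_1,\dots,T_n$ and the entries of $\Phi^2$.
   Context: $A=K[\Phi_{a,b}:1\le a,b\le n]$ is the polynomial ring in the entries of the generic $n\times n$ matrix $\Phi$, and $T_i$ is the sum of all principal $i\times i$ minors of $\Phi$. *)

theory Defs
  imports "HOL-Library.Poly_Mapping" "Jordan_Normal_Form.Determinant" "Jordan_Normal_Form.DL_Submatrix"
begin

text \<open>The polynomial ring A = K[Phi_ab] in the n^2 variables Phi_(a,b), 0 <= a,b < n,
  represented as finitely supported maps from monomials (finitely supported exponent
  vectors indexed by pairs of naturals) to coefficients.\<close>
type_synonym 'a mpoly = "((nat \<times> nat) \<Rightarrow>\<^sub>0 nat) \<Rightarrow>\<^sub>0 'a"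

definition Var :: "nat \<times> nat \<Rightarrow> 'a::comm_ring_1 mpoly" where
  "Var ab = Poly_Mapping.single (Poly_Mapping.single ab 1) 1"

definition generic_mat :: "nat \<Rightarrow> 'a::comm_ring_1 mpoly mat" where
  "generic_mat n = mat n n (\<lambda>(a,b). Var (a,b))"

definition T_coef :: "nat \<Rightarrow> nat \<Rightarrow> 'a::comm_ring_1 mpoly" where
  "T_coef n i = (\<Sum>S\<in>{S. S \<subseteq> {0..<n} \<and> card S = i}. det (submatrix (generic_mat n) S S))"

definition ideal_gen :: "'a::comm_ring_1 set \<Rightarrow> 'a set" where
  "ideal_gen G = {f. \<exists>S c. finite S \<and> S \<subseteq> G \<and> f = (\<Sum>g\<in>S. c g * g)}"

end

theory Submission
  imports Defs
begin

(* Over A[t] let M = Phi + tI and N = Phi - tI. Then MN = Phi^2 - t^2 I is congruent to c I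
   with c = -t^2 modulo J[t], where J is the ideal in question, and replacing columns by unit
   vectors (Jacobi's complementary minor trick) gives, for S a set of indices of size k with
   complement S',
     det M * det N[S,S] == c^k * det M[S',S']   (mod J[t]).
   The coefficient of t^i in det M is T_(n-i), so every coefficient of det M below t^n lies in J;
   if 2k < n this puts the coefficient of t^(2k) of the left side in J. On the right side that
   coefficient is (-1)^k times the constant term det Phi[S',S']. For |S'| = floor(n/2) + 1 we
   have 2k < n. A non-principal minor Phi[I,K] is handled by permuting the rows of M and the
   columns of N, which keeps MN == c I and makes Phi[I,K] the constant term of det M[K,K]. *)

definition is_ideal :: "'a::comm_ring_1 set \<Rightarrow> bool" where
  "is_ideal J \<longleftrightarrow> 0 \<in> J \<and> (\<forall>x\<in>J. \<forall>y\<in>J. x + y \<in> J) \<and> (\<forall>x\<in>J. \<forall>r. r * x \<in> J)"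

context
  fixes J :: "'a::comm_ring_1 set"
  assumes J: "is_ideal J"
begin

lemma ideal_zero: "0 \<in> J"
  using J unfolding is_ideal_def by blast

lemma ideal_add: "x \<in> J \<Longrightarrow> y \<in> J \<Longrightarrow> x + y \<in> J"
  using J unfolding is_ideal_def by blast

lemma ideal_mult_left: "x \<in> J \<Longrightarrow> r * x \<in> J"
  using J unfolding is_ideal_def by blast

lemma ideal_mult_right: "x \<in> J \<Longrightarrow> x * r \<in> J"
  by (metis ideal_mult_left mult.commute)

lemma ideal_diff: "x \<in> J \<Longrightarrow> y \<in> J \<Longrightarrow> x - y \<in> J"
  using ideal_add[of x "(-1) * y"] ideal_mult_left[of y "-1"] by simp

lemma ideal_sum: "(\<And>a. a \<in> A \<Longrightarrow> f a \<in> J) \<Longrightarrow> sum f A \<in> J"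
  by (induction A rule: infinite_finite_induct) (auto simp: ideal_zero ideal_add)

lemma prod_diff_in_ideal:
  assumes "finite A" and "\<And>a. a \<in> A \<Longrightarrow> f a - g a \<in> J"
  shows "prod f A - prod g A \<in> J"
  using assms
proof (induction A rule: finite_induct)
  case empty
  show ?case using ideal_zero by simp
next
  case (insert a A)
  have "prod f (insert a A) - prod g (insert a A) = f a * (prod f A - prod g A) + (f a - g a) * prod g A"
    using insert.hyps by (simp add: algebra_simps)
  then show ?case
    using insert by (simp add: ideal_add ideal_mult_left ideal_mult_right)
qed

lemma det_diff_in_ideal:
  fixes A B :: "'a mat"
  assumes A: "A \<in> carrier_mat n n" and B: "B \<in> carrier_mat n n"
    and AB: "\<And>i j. i < n \<Longrightarrow> j < n \<Longrightarrow> A $$ (i, j) - B $$ (i, j) \<in> J"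
  shows "det A - det B \<in> J"
proof -
  have "signof p * (\<Prod>i = 0..<n. A $$ (i, p i)) - signof p * (\<Prod>i = 0..<n. B $$ (i, p i)) \<in> J"
    if p: "p permutes {0..<n}" for p
  proof -
    have "(\<Prod>i = 0..<n. A $$ (i, p i)) - (\<Prod>i = 0..<n. B $$ (i, p i)) \<in> J"
      using p by (intro prod_diff_in_ideal AB) (auto simp: permutes_in_image)
    then show ?thesis
      using ideal_mult_left by (simp add: right_diff_distrib[symmetric])
  qed
  then have "(\<Sum>p | p permutes {0..<n}. signof p * (\<Prod>i = 0..<n. A $$ (i, p i))
      - signof p * (\<Prod>i = 0..<n. B $$ (i, p i))) \<in> J"
    by (intro ideal_sum) simp
  then show ?thesis
    by (simp add: det_def'[OF A] det_def'[OF B] sum_subtractf)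
qed

end

lemma is_ideal_ideal_gen: "is_ideal (ideal_gen G)"
  unfolding is_ideal_def
proof (intro conjI ballI allI)
  show "0 \<in> ideal_gen G"
    unfolding ideal_gen_def by (intro CollectI exI[of _ "{}"]) simp
next
  fix x y assume "x \<in> ideal_gen G" "y \<in> ideal_gen G"
  then obtain S c T d where S: "finite S" "S \<subseteq> G" "x = (\<Sum>g\<in>S. c g * g)"
    and T: "finite T" "T \<subseteq> G" "y = (\<Sum>g\<in>T. d g * g)"
    unfolding ideal_gen_def by blast
  let ?e = "\<lambda>g. (if g \<in> S then c g else 0) + (if g \<in> T then d g else 0)"
  have e: "?e g * g = (if g \<in> S then c g * g else 0) + (if g \<in> T then d g * g else 0)" for g
    by (simp add: distrib_right)
  have "(\<Sum>g\<in>S \<union> T. ?e g * g) = x + y"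
    unfolding e sum.distrib using S T by (simp flip: sum.inter_restrict add: Int_absorb1 Int_absorb2)
  then show "x + y \<in> ideal_gen G"
    unfolding ideal_gen_def using S(1,2) T(1,2) by (intro CollectI exI[of _ "S \<union> T"] exI[of _ ?e]) auto
next
  fix x r assume "x \<in> ideal_gen G"
  then obtain S c where S: "finite S" "S \<subseteq> G" "x = (\<Sum>g\<in>S. c g * g)"
    unfolding ideal_gen_def by blast
  then have "r * x = (\<Sum>g\<in>S. (r * c g) * g)"
    by (simp add: sum_distrib_left mult.assoc)
  then show "r * x \<in> ideal_gen G"
    unfolding ideal_gen_def using S(1,2) by (intro CollectI exI[of _ S] exI[of _ "\<lambda>g. r * c g"]) auto
qed

lemma generator_in_ideal_gen: "g \<in> G \<Longrightarrow> g \<in> ideal_gen G"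
  unfolding ideal_gen_def by (intro CollectI exI[of _ "{g}"] exI[of _ "\<lambda>_. 1"]) auto

lemma bij_betw_pick:
  assumes "finite F"
  shows "bij_betw (pick F) {0..<card F} F"
proof -
  have inj: "inj_on (pick F) {0..<card F}"
    by (intro inj_onI) (metis atLeastLessThan_iff nat_neq_iff pick_mono)
  have "pick F ` {0..<card F} = F"
    using inj assms by (intro card_subset_eq) (auto simp: card_image pick_in_set)
  with inj show ?thesis by (simp add: bij_betw_def)
qed

lemma carrier_submatrix:
  assumes "A \<in> carrier_mat n m" and "I \<subseteq> {0..<n}" and "J \<subseteq> {0..<m}"
  shows "submatrix A I J \<in> carrier_mat (card I) (card J)"
proof -
  have rows: "{i. i < dim_row A \<and> i \<in> I} = I" and cols: "{j. j < dim_col A \<and> j \<in> J} = J"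
    using assms by auto
  show ?thesis
    by (intro carrier_matI) (simp_all only: dim_submatrix rows cols)
qed

lemma submatrix_index_carrier:
  assumes "A \<in> carrier_mat n m" and "I \<subseteq> {0..<n}" and "J \<subseteq> {0..<m}"
    and "a < card I" and "b < card J"
  shows "submatrix A I J $$ (a, b) = A $$ (pick I a, pick J b)"
proof -
  have rows: "{i. i < dim_row A \<and> i \<in> I} = I" and cols: "{j. j < dim_col A \<and> j \<in> J} = J"
    using assms by auto
  show ?thesis
    by (rule submatrix_index) (unfold rows cols, fact+)
qed

lemma submatrix_eqI:
  assumes "A \<in> carrier_mat n m" and "B \<in> carrier_mat n m"
    and "I \<subseteq> {0..<n}" and "J \<subseteq> {0..<m}"
    and "\<And>i j. i \<in> I \<Longrightarrow> j \<in> J \<Longrightarrow> A $$ (i, j) = B $$ (i, j)"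
  shows "submatrix A I J = submatrix B I J"
proof (rule eq_matI)
  fix a b assume "a < dim_row (submatrix B I J)" and "b < dim_col (submatrix B I J)"
  then have "a < card I" "b < card J"
    using carrier_submatrix[OF assms(2-4)] by auto
  then show "submatrix A I J $$ (a, b) = submatrix B I J $$ (a, b)"
    using assms by (simp add: submatrix_index_carrier pick_in_set)
qed (use carrier_submatrix[OF assms(1,3,4)] carrier_submatrix[OF assms(2-4)] in auto)

lemma submatrix_map_mat:
  assumes A: "A \<in> carrier_mat n m" and I: "I \<subseteq> {0..<n}" and J: "J \<subseteq> {0..<m}"
  shows "submatrix (map_mat f A) I J = map_mat f (submatrix A I J)"
proof -
  have fA: "map_mat f A \<in> carrier_mat n m"
    using A by simp
  show ?thesis
  proof (rule eq_matI)
    fix a b assume "a < dim_row (map_mat f (submatrix A I J))" "b < dim_col (map_mat f (submatrix A I J))"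
    then have ab: "a < card I" "b < card J"
      using carrier_submatrix[OF A I J] by auto
    have "pick I a \<in> I" "pick J b \<in> J"
      using ab by (simp_all add: pick_in_set)
    then have "pick I a < n" "pick J b < m"
      using I J by auto
    then show "submatrix (map_mat f A) I J $$ (a, b) = map_mat f (submatrix A I J) $$ (a, b)"
      using ab A carrier_submatrix[OF A I J]
      by (simp add: submatrix_index_carrier[OF fA I J] submatrix_index_carrier[OF A I J])
  qed (use carrier_submatrix[OF A I J] carrier_submatrix[OF fA I J] in auto)
qed

lemma det_principal_submatrix_eq_sum_permutes:
  fixes A :: "'a::comm_ring_1 mat"
  assumes A: "A \<in> carrier_mat n n" and F: "F \<subseteq> {0..<n}"
  shows "det (submatrix A F F) = (\<Sum>p | p permutes F. signof p * (\<Prod>j\<in>F. A $$ (p j, j)))"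
proof -
  let ?k = "card F"
  have pick: "bij_betw (pick F) {0..<?k} F"
    using F by (intro bij_betw_pick) (auto intro: finite_subset)
  define lift where "lift q = map_permutation {0..<?k} (pick F) q" for q
  have lift_bij: "bij_betw lift {q. q permutes {0..<?k}} {p. p permutes F}"
  proof -
    have "lift = (\<lambda>q x. if x \<in> F then pick F (q (inv_into {0..<?k} (pick F) x)) else x)"
      using pick by (auto simp: fun_eq_iff lift_def map_permutation_def restrict_id_def bij_betw_def)
    then show ?thesis using bij_betw_permutations[OF pick] by simp
  qed
  have "det (submatrix A F F) = (\<Sum>q | q permutes {0..<?k}. signof q * (\<Prod>j\<in>{0..<?k}. A $$ (pick F (q j), pick F j)))"
    unfolding det_col[OF carrier_submatrix[OF A F F]] lessThan_atLeast0
    by (intro sum.cong refl arg_cong2[where f = "(*)"] prod.cong)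
       (auto simp: submatrix_index_carrier[OF A F F] permutes_in_image)
  also have "\<dots> = (\<Sum>q | q permutes {0..<?k}. signof (lift q) * (\<Prod>j\<in>F. A $$ (lift q j, j)))"
  proof (intro sum.cong refl)
    fix q assume "q \<in> {q. q permutes {0..<?k}}"
    then have q: "q permutes {0..<?k}" by simp
    have inj: "inj_on (pick F) {0..<?k}"
      using pick by (rule bij_betw_imp_inj_on)
    have "(\<Prod>j\<in>F. A $$ (lift q j, j)) = (\<Prod>j\<in>{0..<?k}. A $$ (lift q (pick F j), pick F j))"
      by (rule prod.reindex_bij_betw[OF pick, symmetric])
    also have "\<dots> = (\<Prod>j\<in>{0..<?k}. A $$ (pick F (q j), pick F j))"
      unfolding lift_def using inj by (intro prod.cong refl) (simp add: map_permutation_apply)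
    moreover have "sign (lift q) = sign q"
      unfolding lift_def using inj q by (rule sign_map_permutation) simp
    ultimately show "signof q * (\<Prod>j\<in>{0..<?k}. A $$ (pick F (q j), pick F j))
        = signof (lift q) * (\<Prod>j\<in>F. A $$ (lift q j, j))"
      by simp
  qed
  also have "\<dots> = (\<Sum>p | p permutes F. signof p * (\<Prod>j\<in>F. A $$ (p j, j)))"
    by (rule sum.reindex_bij_betw[OF lift_bij])
  finally show ?thesis .
qed

lemma sum_permutes_fixing_complement:
  assumes "finite U" and "F \<subseteq> U"
  shows "(\<Sum>p | p permutes U. if \<forall>j\<in>U - F. p j = j then g p else 0) = (\<Sum>p | p permutes F. g p)"
proof -
  have "{p \<in> {p. p permutes U}. \<forall>j\<in>U - F. p j = j} = {p. p permutes F}"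
    using assms(2) by (auto simp: permutes_def)
  then show ?thesis
    using assms(1) by (simp add: sum.inter_filter[symmetric] finite_permutations)
qed

lemma prod_if_fixed:
  fixes d :: "'a \<Rightarrow> 'b::comm_semiring_1"
  assumes "finite S"
  shows "(\<Prod>j\<in>S. if p j = j then d j else 0) = (if \<forall>j\<in>S. p j = j then prod d S else 0)"
proof (cases "\<forall>j\<in>S. p j = j")
  case True
  then show ?thesis by (auto intro: prod.cong)
next
  case False
  then obtain i where "i \<in> S" "p i \<noteq> i" by blast
  then have "(\<Prod>j\<in>S. if p j = j then d j else 0) = 0"
    using assms by (intro prod_zero) auto
  with False show ?thesis by auto
qed

lemma det_diagonal_outside_cols:
  fixes C :: "'a::comm_ring_1 mat"
  assumes C: "C \<in> carrier_mat n n" and T: "T \<subseteq> {0..<n}"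
    and diag: "\<And>i j. i < n \<Longrightarrow> j \<in> {0..<n} - T \<Longrightarrow> C $$ (i, j) = (if i = j then d j else 0)"
  shows "det C = (\<Prod>j\<in>{0..<n} - T. d j) * det (submatrix C T T)"
proof -
  let ?U = "{0..<n}"
  have "(\<Prod>j<n. C $$ (p j, j))
      = (if \<forall>j\<in>?U - T. p j = j then (\<Prod>j\<in>?U - T. d j) else 0) * (\<Prod>j\<in>T. C $$ (p j, j))"
    if p: "p permutes ?U" for p
  proof -
    have "(\<Prod>j<n. C $$ (p j, j)) = (\<Prod>j\<in>?U - T. C $$ (p j, j)) * (\<Prod>j\<in>T. C $$ (p j, j))"
      using T by (simp add: lessThan_atLeast0 prod.subset_diff)
    also have "(\<Prod>j\<in>?U - T. C $$ (p j, j)) = (\<Prod>j\<in>?U - T. if p j = j then d j else 0)"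
      using p by (intro prod.cong refl) (auto simp: diag permutes_in_image)
    finally show ?thesis by (simp add: prod_if_fixed)
  qed
  then have "det C = (\<Sum>p | p permutes ?U.
      if \<forall>j\<in>?U - T. p j = j then (\<Prod>j\<in>?U - T. d j) * (signof p * (\<Prod>j\<in>T. C $$ (p j, j))) else 0)"
    unfolding det_col[OF C] by (intro sum.cong refl) auto
  also have "\<dots> = (\<Prod>j\<in>?U - T. d j) * (\<Sum>p | p permutes T. signof p * (\<Prod>j\<in>T. C $$ (p j, j)))"
    using T by (simp add: sum_permutes_fixing_complement sum_distrib_left)
  finally show ?thesis
    by (simp add: det_principal_submatrix_eq_sum_permutes[OF C T])
qed

lemma det_add_smult_one_mat:
  fixes A :: "'a::comm_ring_1 mat"
  assumes A: "A \<in> carrier_mat n n"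
  shows "det (A + x \<cdot>\<^sub>m 1\<^sub>m n) = (\<Sum>F\<in>Pow {0..<n}. x ^ (n - card F) * det (submatrix A F F))"
proof -
  let ?U = "{0..<n}"
  let ?P = "{p. p permutes ?U}"
  have "A + x \<cdot>\<^sub>m 1\<^sub>m n \<in> carrier_mat n n"
    using A by simp
  note det_sum = det_col[OF this]
  have expand: "(\<Prod>j<n. (A + x \<cdot>\<^sub>m 1\<^sub>m n) $$ (p j, j))
      = (\<Sum>F\<in>Pow ?U. (\<Prod>j\<in>F. A $$ (p j, j)) * (\<Prod>j\<in>?U - F. if p j = j then x else 0))"
    if "p \<in> ?P" for p
  proof -
    have "(\<Prod>j<n. (A + x \<cdot>\<^sub>m 1\<^sub>m n) $$ (p j, j)) = (\<Prod>j\<in>?U. A $$ (p j, j) + (if p j = j then x else 0))"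
      using that A by (auto simp: lessThan_atLeast0 permutes_in_image intro!: prod.cong)
    then show ?thesis
      by (simp add: prod_add)
  qed
  have "det (A + x \<cdot>\<^sub>m 1\<^sub>m n) = (\<Sum>p\<in>?P. \<Sum>F\<in>Pow ?U.
      signof p * ((\<Prod>j\<in>F. A $$ (p j, j)) * (\<Prod>j\<in>?U - F. if p j = j then x else 0)))"
    unfolding det_sum by (intro sum.cong refl) (simp only: expand sum_distrib_left)
  also have "\<dots> = (\<Sum>F\<in>Pow ?U. \<Sum>p\<in>?P.
      signof p * ((\<Prod>j\<in>F. A $$ (p j, j)) * (\<Prod>j\<in>?U - F. if p j = j then x else 0)))"
    by (rule sum.swap)
  also have "\<dots> = (\<Sum>F\<in>Pow ?U. x ^ (n - card F) * det (submatrix A F F))"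
  proof (rule sum.cong[OF refl])
    fix F assume "F \<in> Pow ?U"
    then have F: "F \<subseteq> ?U" by simp
    then have "card (?U - F) = n - card F"
      by (simp add: card_Diff_subset finite_subset)
    then have "signof p * ((\<Prod>j\<in>F. A $$ (p j, j)) * (\<Prod>j\<in>?U - F. if p j = j then x else 0))
        = (if \<forall>j\<in>?U - F. p j = j then x ^ (n - card F) * (signof p * (\<Prod>j\<in>F. A $$ (p j, j))) else 0)" for p
      by (simp add: prod_if_fixed)
    then show "(\<Sum>p\<in>?P. signof p * ((\<Prod>j\<in>F. A $$ (p j, j)) * (\<Prod>j\<in>?U - F. if p j = j then x else 0)))
        = x ^ (n - card F) * det (submatrix A F F)"
      using F by (simp add: sum_permutes_fixing_complement det_principal_submatrix_eq_sum_permutes[OF A F] sum_distrib_left)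
  qed
  finally show ?thesis .
qed

lemma jacobi_complementary_minor_mod_ideal:
  fixes M N :: "'a::comm_ring_1 mat"
  assumes J: "is_ideal J" and M: "M \<in> carrier_mat n n" and N: "N \<in> carrier_mat n n"
    and S: "S \<subseteq> {0..<n}"
    and MN: "\<And>i j. i < n \<Longrightarrow> j < n \<Longrightarrow> (M * N) $$ (i, j) - (if i = j then c else 0) \<in> J"
  shows "det M * det (submatrix N S S) - c ^ card S * det (submatrix M ({0..<n} - S) ({0..<n} - S)) \<in> J"
proof -
  let ?U = "{0..<n}"
  define B where "B = mat n n (\<lambda>(i, j). if j \<in> S then N $$ (i, j) else if i = j then 1 else 0)"
  define C where "C = mat n n (\<lambda>(i, j). if j \<in> S then if i = j then c else 0 else M $$ (i, j))"
  have B: "B \<in> carrier_mat n n" and C: "C \<in> carrier_mat n n"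
    unfolding B_def C_def by auto
  have "det B = det (submatrix N S S)"
  proof -
    have "det B = (\<Prod>j\<in>?U - S. 1) * det (submatrix B S S)"
      by (rule det_diagonal_outside_cols[OF B S]) (auto simp: B_def)
    also have "submatrix B S S = submatrix N S S"
      using S by (intro submatrix_eqI[OF B N]) (auto simp: B_def subset_iff)
    finally show ?thesis by simp
  qed
  moreover have "det C = c ^ card S * det (submatrix M (?U - S) (?U - S))"
  proof -
    have "det C = (\<Prod>j\<in>?U - (?U - S). c) * det (submatrix C (?U - S) (?U - S))"
      by (rule det_diagonal_outside_cols) (auto simp: C_def)
    also have "?U - (?U - S) = S"
      using S by auto
    also have "submatrix C (?U - S) (?U - S) = submatrix M (?U - S) (?U - S)"
      by (intro submatrix_eqI[OF C M]) (auto simp: C_def)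
    finally show ?thesis by simp
  qed
  moreover have "det (M * B) - det C \<in> J"
  proof (rule det_diff_in_ideal[OF J mult_carrier_mat[OF M B] C])
    fix i j assume ij: "i < n" "j < n"
    show "(M * B) $$ (i, j) - C $$ (i, j) \<in> J"
    proof (cases "j \<in> S")
      case True
      then have "col B j = col N j"
        using ij B N by (intro eq_vecI) (auto simp: B_def)
      then show ?thesis
        using True ij M N B MN[OF ij] by (simp add: C_def)
    next
      case False
      then have "col B j = unit_vec n j"
        using ij by (intro eq_vecI) (auto simp: B_def)
      then show ?thesis
        using False ij M B by (simp add: C_def ideal_zero[OF J])
    qed
  qed
  ultimately show ?thesis
    by (simp add: det_mult[OF M B])
qed

definition coeff_ideal :: "'a::comm_ring_1 set \<Rightarrow> 'a poly set" where
  "coeff_ideal J = {p. \<forall>k. coeff p k \<in> J}"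

lemma is_ideal_coeff_ideal:
  assumes J: "is_ideal J"
  shows "is_ideal (coeff_ideal J)"
  unfolding is_ideal_def coeff_ideal_def
  by (auto simp: coeff_mult ideal_zero[OF J] ideal_add[OF J] intro!: ideal_sum[OF J] ideal_mult_left[OF J])

lemma const_in_coeff_ideal: "is_ideal J \<Longrightarrow> x \<in> J \<Longrightarrow> [:x:] \<in> coeff_ideal J"
  by (auto simp: coeff_ideal_def coeff_pCons ideal_zero split: nat.splits)

lemma coeff_mult_in_ideal:
  assumes J: "is_ideal J" and p: "\<And>i. i \<le> k \<Longrightarrow> coeff p i \<in> J"
  shows "coeff (p * q) k \<in> J"
  unfolding coeff_mult using p by (intro ideal_sum[OF J] ideal_mult_right[OF J]) auto

interpretation const_poly: comm_ring_hom "\<lambda>a::'a::comm_ring_1. [:a:]"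
  by unfold_locales auto

interpretation poly_eval: comm_ring_hom "\<lambda>q::'a::comm_ring_1 poly. poly q a"
  by unfold_locales auto

lemma coeff_det_add_X:
  fixes A :: "'a::comm_ring_1 mat"
  assumes A: "A \<in> carrier_mat n n" and k: "k < n"
  shows "coeff (det (map_mat (\<lambda>a. [:a:]) A + [:0, 1:] \<cdot>\<^sub>m 1\<^sub>m n)) k
    = (\<Sum>S\<in>{S. S \<subseteq> {0..<n} \<and> card S = n - k}. det (submatrix A S S))"
proof -
  let ?U = "{0..<n}"
  have "det (submatrix (map_mat (\<lambda>a. [:a:]) A) F F) = [:det (submatrix A F F):]" if "F \<subseteq> ?U" for F
    using that A by (simp add: submatrix_map_mat const_poly.hom_det)
  then have "det (map_mat (\<lambda>a. [:a:]) A + [:0, 1:] \<cdot>\<^sub>m 1\<^sub>m n)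
      = (\<Sum>F\<in>Pow ?U. monom (det (submatrix A F F)) (n - card F))"
    using A by (simp add: det_add_smult_one_mat monom_altdef mult.commute)
  also have "coeff \<dots> k = (\<Sum>F\<in>Pow ?U. if card F = n - k then det (submatrix A F F) else 0)"
    unfolding coeff_sum
  proof (intro sum.cong refl)
    fix F assume "F \<in> Pow ?U"
    then have "card F \<le> n"
      using card_mono[of ?U F] by auto
    then show "coeff (monom (det (submatrix A F F)) (n - card F)) k
        = (if card F = n - k then det (submatrix A F F) else 0)"
      using k by (auto simp: coeff_monom)
  qed
  also have "\<dots> = (\<Sum>S\<in>{S. S \<subseteq> ?U \<and> card S = n - k}. det (submatrix A S S))"
    by (simp add: sum.inter_filter[symmetric] Pow_def conj_commute)
  finally show ?thesis .
qed

lemma mult_add_smult_one_minus_smult_one: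
  fixes B :: "'a::comm_ring_1 mat"
  assumes B: "B \<in> carrier_mat n n"
  shows "(B + x \<cdot>\<^sub>m 1\<^sub>m n) * (B - x \<cdot>\<^sub>m 1\<^sub>m n) = B * B - x ^ 2 \<cdot>\<^sub>m 1\<^sub>m n"
proof -
  have X: "x \<cdot>\<^sub>m 1\<^sub>m n \<in> carrier_mat n n"
    by simp
  then have BX: "B - x \<cdot>\<^sub>m 1\<^sub>m n \<in> carrier_mat n n"
    by (rule minus_carrier_mat)
  have "(B + x \<cdot>\<^sub>m 1\<^sub>m n) * (B - x \<cdot>\<^sub>m 1\<^sub>m n)
      = B * (B - x \<cdot>\<^sub>m 1\<^sub>m n) + (x \<cdot>\<^sub>m 1\<^sub>m n) * (B - x \<cdot>\<^sub>m 1\<^sub>m n)"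
    by (rule add_mult_distrib_mat[OF B X BX])
  also have "B * (B - x \<cdot>\<^sub>m 1\<^sub>m n) = B * B - x \<cdot>\<^sub>m B"
    using B by (simp add: mult_minus_distrib_mat[OF B B X] mult_smult_distrib[OF B one_carrier_mat])
  also have "(x \<cdot>\<^sub>m 1\<^sub>m n) * (B - x \<cdot>\<^sub>m 1\<^sub>m n) = x \<cdot>\<^sub>m (B - x \<cdot>\<^sub>m 1\<^sub>m n)"
    using B by (simp add: mult_smult_assoc_mat[OF one_carrier_mat BX])
  also have "B * B - x \<cdot>\<^sub>m B + x \<cdot>\<^sub>m (B - x \<cdot>\<^sub>m 1\<^sub>m n) = B * B - x ^ 2 \<cdot>\<^sub>m 1\<^sub>m n"
    using B by (intro eq_matI) (auto simp: algebra_simps power2_eq_square)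
  finally show ?thesis .
qed

definition permute_rows :: "(nat \<Rightarrow> nat) \<Rightarrow> 'a mat \<Rightarrow> 'a mat" where
  "permute_rows p A = mat (dim_row A) (dim_col A) (\<lambda>(i, j). A $$ (p i, j))"

definition permute_cols :: "(nat \<Rightarrow> nat) \<Rightarrow> 'a mat \<Rightarrow> 'a mat" where
  "permute_cols p A = mat (dim_row A) (dim_col A) (\<lambda>(i, j). A $$ (i, p j))"

lemma permute_rows_carrier [simp]: "A \<in> carrier_mat n m \<Longrightarrow> permute_rows p A \<in> carrier_mat n m"
  by (simp add: permute_rows_def)

lemma permute_cols_carrier [simp]: "A \<in> carrier_mat n m \<Longrightarrow> permute_cols p A \<in> carrier_mat n m"
  by (simp add: permute_cols_def)

lemma det_permute_rows_signof:
  assumes A: "A \<in> carrier_mat n n" and p: "p permutes {0..<n}"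
  shows "det (permute_rows p A) = signof p * det A"
proof -
  have "permute_rows p A = mat n n (\<lambda>(i, j). A $$ (p i, j))"
    using A by (simp add: permute_rows_def)
  then show ?thesis
    using det_permute_rows[OF A p] by simp
qed

lemma permute_rows_cols_mult_cong:
  fixes M N :: "'a::comm_ring_1 mat"
  assumes M: "M \<in> carrier_mat n n" and N: "N \<in> carrier_mat n n" and p: "p permutes {0..<n}"
    and MN: "\<And>i j. i < n \<Longrightarrow> j < n \<Longrightarrow> (M * N) $$ (i, j) - (if i = j then c else 0) \<in> J"
    and ij: "i < n" "j < n"
  shows "(permute_rows p M * permute_cols p N) $$ (i, j) - (if i = j then c else 0) \<in> J"
proof -
  have p_lt: "p l < n" if "l < n" for l
    using p that by (simp add: permutes_in_image)
  have "(permute_rows p M * permute_cols p N) $$ (i, j) = (M * N) $$ (p i, p j)"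
    using M N ij p_lt by (simp add: permute_rows_def permute_cols_def scalar_prod_def)
  moreover have "p i = p j \<longleftrightarrow> i = j"
    using permutes_inj[OF p] by (auto dest: injD)
  ultimately show ?thesis
    using MN[OF p_lt[OF ij(1)] p_lt[OF ij(2)]] by simp
qed

lemma submatrix_permute_rows:
  assumes A: "A \<in> carrier_mat n m" and I: "I \<subseteq> {0..<n}" and K: "K \<subseteq> {0..<n}" and L: "L \<subseteq> {0..<m}"
    and card: "card I = card K" and p_pick: "\<And>a. a < card K \<Longrightarrow> p (pick K a) = pick I a"
  shows "submatrix (permute_rows p A) K L = submatrix A I L"
proof (rule eq_matI)
  fix a b assume "a < dim_row (submatrix A I L)" "b < dim_col (submatrix A I L)"
  then have ab: "a < card K" "b < card L"
    using carrier_submatrix[OF A I L] card by auto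
  have "pick K a \<in> K" "pick I a \<in> I" "pick L b \<in> L"
    using ab card by (simp_all add: pick_in_set)
  then have "pick K a < n" "pick I a < n" "pick L b < m"
    using I K L by auto
  then have "permute_rows p A $$ (pick K a, pick L b) = A $$ (pick I a, pick L b)"
    using A ab p_pick by (simp add: permute_rows_def)
  then show "submatrix (permute_rows p A) K L $$ (a, b) = submatrix A I L $$ (a, b)"
    using ab card
    by (simp add: submatrix_index_carrier[OF permute_rows_carrier[OF A] K L]
        submatrix_index_carrier[OF A I L])
qed (use carrier_submatrix[OF A I L] carrier_submatrix[OF permute_rows_carrier[OF A] K L] card in auto)

lemma exists_permutes_pick:
  assumes I: "I \<subseteq> {0..<n}" and K: "K \<subseteq> {0..<n}" and card: "card I = card K"
  obtains p where "p permutes {0..<n}" and "\<And>a. a < card K \<Longrightarrow> p (pick K a) = pick I a"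
proof -
  let ?U = "{0..<n}"
  have fin: "finite I" "finite K"
    using I K finite_subset by blast+
  have pick_K: "bij_betw (pick K) {0..<card K} K"
    by (rule bij_betw_pick[OF fin(2)])
  define f where "f = pick I \<circ> inv_into {0..<card K} (pick K)"
  have f: "bij_betw f K I"
    unfolding f_def using bij_betw_inv_into[OF pick_K] bij_betw_pick[OF fin(1)] card
    by (auto intro: bij_betw_trans)
  have f_pick: "f (pick K a) = pick I a" if "a < card K" for a
    using pick_K that by (simp add: f_def bij_betw_imp_inj_on inv_into_f_f)
  obtain g where g: "bij_betw g (?U - K) (?U - I)"
    using I K card fin by (metis card_Diff_subset finite_Diff finite_atLeastLessThan finite_same_card_bij)
  define p where "p x = (if x \<in> K then f x else if x \<in> ?U then g x else x)" for x
  have "bij_betw p K I"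
    using f by (rule bij_betw_cong[THEN iffD1, rotated]) (simp add: p_def)
  moreover have "bij_betw p (?U - K) (?U - I)"
    using g by (rule bij_betw_cong[THEN iffD1, rotated]) (simp add: p_def)
  ultimately have "bij_betw p (K \<union> (?U - K)) (I \<union> (?U - I))"
    by (rule bij_betw_combine) blast
  moreover have "K \<union> (?U - K) = ?U" "I \<union> (?U - I) = ?U"
    using I K by auto
  ultimately have "p permutes ?U"
    by (intro bij_imp_permutes) (use K in \<open>auto simp: p_def\<close>)
  moreover have "p (pick K a) = pick I a" if "a < card K" for a
    using that f_pick pick_in_set by (simp add: p_def)
  ultimately show thesis
    using that by blast
qed

lemma coeff_det_permute_rows_add_X_in_ideal:
  fixes A :: "'a::comm_ring_1 mat"
  assumes J: "is_ideal J" and A: "A \<in> carrier_mat n n" and p: "p permutes {0..<n}"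
    and minor_sums: "\<And>i. 1 \<le> i \<Longrightarrow> i \<le> n \<Longrightarrow>
      (\<Sum>S\<in>{S. S \<subseteq> {0..<n} \<and> card S = i}. det (submatrix A S S)) \<in> J"
    and i: "i < n"
  shows "coeff (det (permute_rows p (map_mat (\<lambda>a. [:a:]) A + [:0, 1:] \<cdot>\<^sub>m 1\<^sub>m n))) i \<in> J"
proof -
  let ?M = "map_mat (\<lambda>a. [:a:]) A + [:0, 1:] \<cdot>\<^sub>m 1\<^sub>m n"
  have M: "?M \<in> carrier_mat n n"
    using A by simp
  have "coeff (det (permute_rows p ?M)) i = of_int (sign p) * coeff (det ?M) i"
    unfolding det_permute_rows_signof[OF M p]
    by (subst of_int_monom) (simp only: coeff_monom_mult, simp)
  also have "\<dots> = of_int (sign p) * (\<Sum>S\<in>{S. S \<subseteq> {0..<n} \<and> card S = n - i}. det (submatrix A S S))"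
    unfolding coeff_det_add_X[OF A i] ..
  finally show ?thesis
    using minor_sums[of "n - i"] i ideal_mult_left[OF J] by simp
qed

lemma add_X_mult_minus_X_mod_coeff_ideal:
  fixes A :: "'a::comm_ring_1 mat"
  assumes J: "is_ideal J" and A: "A \<in> carrier_mat n n"
    and square: "\<And>a b. a < n \<Longrightarrow> b < n \<Longrightarrow> (A * A) $$ (a, b) \<in> J"
    and ij: "i < n" "j < n"
  shows "((map_mat (\<lambda>a. [:a:]) A + [:0, 1:] \<cdot>\<^sub>m 1\<^sub>m n)
      * (map_mat (\<lambda>a. [:a:]) A - [:0, 1:] \<cdot>\<^sub>m 1\<^sub>m n)) $$ (i, j)
    - (if i = j then monom (-1) 2 else 0) \<in> coeff_ideal J"
proof -
  let ?L = "map_mat (\<lambda>a. [:a:]) A"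
  have L: "?L \<in> carrier_mat n n"
    using A by simp
  have "?L * ?L = map_mat (\<lambda>a. [:a:]) (A * A)"
    by (rule const_poly.mat_hom_mult[OF A A, symmetric])
  then have "((?L + [:0, 1:] \<cdot>\<^sub>m 1\<^sub>m n) * (?L - [:0, 1:] \<cdot>\<^sub>m 1\<^sub>m n)) $$ (i, j)
      - (if i = j then monom (-1) 2 else 0) = [:(A * A) $$ (i, j):]"
    using ij A by (simp add: mult_add_smult_one_minus_smult_one[OF L] monom_altdef)
  then show ?thesis
    using const_in_coeff_ideal[OF J square[OF ij]] by simp
qed

lemma coeff_0_in_ideal_if_cong:
  assumes J: "is_ideal J"
    and cong: "p * q - monom (-1) 2 ^ k * r \<in> coeff_ideal J"
    and low: "\<And>i. i \<le> 2 * k \<Longrightarrow> coeff p i \<in> J"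
  shows "coeff r 0 \<in> J"
proof -
  have diff: "coeff (p * q) (2 * k) - coeff (monom (-1) 2 ^ k * r) (2 * k) \<in> J"
    using cong unfolding coeff_ideal_def coeff_diff[symmetric] by blast
  have "coeff (p * q) (2 * k) \<in> J"
    using low by (rule coeff_mult_in_ideal[OF J])
  from ideal_diff[OF J this diff] have "coeff (monom (-1) 2 ^ k * r) (2 * k) \<in> J"
    by simp
  then have "(-1) ^ k * coeff r 0 \<in> J"
    by (simp add: monom_power coeff_monom_mult)
  then have "(-1) ^ k * ((-1) ^ k * coeff r 0) \<in> J"
    by (rule ideal_mult_left[OF J])
  then show ?thesis
    by (simp flip: power_mult_distrib)
qed

theorem det_submatrix_in_ideal:
  fixes A :: "'a::comm_ring_1 mat"
  assumes J: "is_ideal J" and A: "A \<in> carrier_mat n n"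
    and square: "\<And>a b. a < n \<Longrightarrow> b < n \<Longrightarrow> (A * A) $$ (a, b) \<in> J"
    and minor_sums: "\<And>i. 1 \<le> i \<Longrightarrow> i \<le> n \<Longrightarrow>
      (\<Sum>S\<in>{S. S \<subseteq> {0..<n} \<and> card S = i}. det (submatrix A S S)) \<in> J"
    and I: "I \<subseteq> {0..<n}" and K: "K \<subseteq> {0..<n}" and card: "card I = card K"
    and large: "n < 2 * card K"
  shows "det (submatrix A I K) \<in> J"
proof -
  let ?U = "{0..<n}" and ?X = "[:0, 1:] :: 'a poly"
  obtain p where p: "p permutes ?U" and p_pick: "\<And>a. a < card K \<Longrightarrow> p (pick K a) = pick I a"
    using exists_permutes_pick[OF I K card] by blast
  define L where "L = map_mat (\<lambda>a. [:a:]) A"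
  \<comment> \<open>Permuting the rows by p makes A[I,K] the value of the principal minor M[K,K] at t = 0.\<close>
  define M where "M = permute_rows p (L + ?X \<cdot>\<^sub>m 1\<^sub>m n)"
  define N where "N = permute_cols p (L - ?X \<cdot>\<^sub>m 1\<^sub>m n)"
  have LX: "L + ?X \<cdot>\<^sub>m 1\<^sub>m n \<in> carrier_mat n n" "L - ?X \<cdot>\<^sub>m 1\<^sub>m n \<in> carrier_mat n n"
    using A by (auto simp: L_def intro: minus_carrier_mat)
  then have M: "M \<in> carrier_mat n n" and N: "N \<in> carrier_mat n n"
    by (simp_all add: M_def N_def)
  have "(M * N) $$ (i, j) - (if i = j then monom (-1) 2 else 0) \<in> coeff_ideal J" if "i < n" "j < n" for i j
    unfolding M_def N_def L_def
    using permute_rows_cols_mult_cong[OF LX[unfolded L_def] p add_X_mult_minus_X_mod_coeff_ideal[OF J A square] that] .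
  then have "det M * det (submatrix N (?U - K) (?U - K)) - monom (-1) 2 ^ card (?U - K) * det (submatrix M K K)
      \<in> coeff_ideal J"
    using jacobi_complementary_minor_mod_ideal[OF is_ideal_coeff_ideal[OF J] M N, of "?U - K"] K
    by (simp add: double_diff)
  moreover have "coeff (det M) i \<in> J" if "i \<le> 2 * card (?U - K)" for i
  proof -
    have "i < n"
      using that large K card_mono[OF finite_atLeastLessThan K]
      by (simp add: card_Diff_subset finite_subset)
    then show ?thesis
      using coeff_det_permute_rows_add_X_in_ideal[OF J A p minor_sums] by (simp add: M_def L_def)
  qed
  ultimately have "coeff (det (submatrix M K K)) 0 \<in> J"
    by (rule coeff_0_in_ideal_if_cong[OF J])
  moreover have "map_mat (\<lambda>q. poly q 0) M = permute_rows p A"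
    using A permutes_in_image[OF p] by (intro eq_matI) (auto simp: M_def L_def permute_rows_def)
  then have "coeff (det (submatrix M K K)) 0 = det (submatrix A I K)"
    using submatrix_map_mat[OF M K K, of "\<lambda>q. poly q 0"] submatrix_permute_rows[OF A I K K card p_pick]
    by (simp flip: poly_eval.hom_det poly_0_coeff_0)
  ultimately show ?thesis
    by simp
qed

theorem lemma4:
  fixes n :: nat and I J :: "nat set"
  assumes "n \<ge> 1"
    and "I \<subseteq> {0..<n}" and "J \<subseteq> {0..<n}"
    and "card I = n div 2 + 1" and "card J = n div 2 + 1"
  shows "(det (submatrix (generic_mat n) I J) :: 'a::field mpoly)
           \<in> ideal_gen ({T_coef n i | i. 1 \<le> i \<and> i \<le> n}
                        \<union> {(generic_mat n * generic_mat n) $$ (a, b) | a b. a < n \<and> b < n})"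
proof (rule det_submatrix_in_ideal[OF is_ideal_ideal_gen _ _ _ assms(2,3)])
  show "generic_mat n \<in> carrier_mat n n"
    by (simp add: generic_mat_def)
  show "(generic_mat n * generic_mat n) $$ (a, b) \<in> ideal_gen ({T_coef n i | i. 1 \<le> i \<and> i \<le> n}
      \<union> {(generic_mat n * generic_mat n) $$ (a, b) | a b. a < n \<and> b < n})" if "a < n" "b < n" for a b
    using that by (intro generator_in_ideal_gen) blast
  show "(\<Sum>S\<in>{S. S \<subseteq> {0..<n} \<and> card S = i}. det (submatrix (generic_mat n) S S))
      \<in> ideal_gen ({T_coef n i | i. 1 \<le> i \<and> i \<le> n}
      \<union> {(generic_mat n * generic_mat n) $$ (a, b) | a b. a < n \<and> b < n})" if "1 \<le> i" "i \<le> n" for i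
    using that unfolding T_coef_def[symmetric] by (intro generator_in_ideal_gen) blast
qed (use assms(4,5) in presburger)+

end
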